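(* Let $f,g:\mathbb{R}^n\to[0,+\infty)$ and $h_1,h_2:\mathbb{R}^n\to\mathbb{R}$, let $C\subseteq\mathbb{R}^n$ be closed and convex, $\Omega:=\{x\in\mathbb{R}^n:g(x)\neq0\}$, $C\cap\Omega\neq\emptyset$, and assume: $f$ is convex; $g$ is differentiable with locally Lipschitz gradient on $\mathbb{R}^n$; $h_1$ is differentiable with locally Lipschitz gradient on $\mathbb{R}^n$; $h_2$ is convex. If $x^\star$ is a local minimizer of the problem $\min\{f^2(x)/g(x)+h_1(x)-h_2(x):x\in C\cap\Omega\}$, then with $c_\star=f(x^\star)/g(x^\star)$ it holds that $$0\in\partial(2c_\star f+\iota_C)(x^\star)-c_\star^2\nabla g(x^\star)+\nabla h_1(x^\star)-\partial h_2(x^\star).$$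
   Context: $\iota_C$ is the indicator function of $C$ ($0$ on $C$, $+\infty$ off $C$). $\partial$ denotes the limiting (Mordukhovich) subdifferential, which coincides with the convex subdifferential for convex functions. *)

theory Defs
  imports "HOL-Analysis.Analysis" "HOL-Library.Extended_Real"
begin

definition ind_fun :: "'a set \<Rightarrow> 'a \<Rightarrow> ereal" where
  "ind_fun C x = (if x \<in> C then 0 else \<infinity>)"

text \<open>Subdifferential (of convex analysis) of an extended-real valued function at x.
  For convex functions it coincides with the limiting (Mordukhovich) subdifferential.\<close>
definition subdiff :: "('a::real_inner \<Rightarrow> ereal) \<Rightarrow> 'a \<Rightarrow> 'a set" where
  "subdiff \<phi> x = {v. \<bar>\<phi> x\<bar> \<noteq> \<infinity> \<and> (\<forall>y. \<phi> x + ereal (v \<bullet> (y - x)) \<le> \<phi> y)}"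

end

theory Submission
  imports Defs
begin

(* Fix a subgradient w of h2 at xs and a point y of C, and follow the segment xs + t (y - xs).
   Along it, convexity bounds f by its chord and w bounds h2 below by an affine function, so the
   objective is majorised by a function of t that is differentiable at 0 and agrees with the
   objective there.  Local minimality forces the right derivative of this majorant at 0 to be
   nonnegative, and that derivative is 2 c (f y - f xs) - <c^2 grad g - grad h1 + w, y - xs>.
   This is the subgradient inequality of 2 c f + indicator C at xs for
   u = c^2 grad g(xs) - grad h1(xs) + w. *)

lemma convex_on_separating_hyperplane_epigraph:
  fixes h :: "'a::euclidean_space \<Rightarrow> real"
  assumes "convex_on UNIV h"
  obtains a b \<beta> where "(a, b) \<noteq> 0"
    and "\<And>r. r < h x \<Longrightarrow> a \<bullet> x + b * r \<le> \<beta>"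
    and "\<And>y r. h y \<le> r \<Longrightarrow> \<beta> \<le> a \<bullet> y + b * r"
proof -
  have "convex ({x} \<times> {..<h x})" by (simp add: convex_Times)
  moreover have "convex (epigraph UNIV h)" using assms by (rule convex_epigraphI)
  moreover have "{x} \<times> {..<h x} \<noteq> {}" by (auto intro!: exI[of _ "h x - 1"])
  moreover have "(x, h x) \<in> epigraph UNIV h" by (simp add: mem_epigraph)
  then have "epigraph UNIV h \<noteq> {}" by blast
  moreover have "({x} \<times> {..<h x}) \<inter> epigraph UNIV h = {}" by (auto simp: mem_epigraph)
  ultimately obtain ab \<beta> where "ab \<noteq> 0"
    and lower: "\<forall>z\<in>{x} \<times> {..<h x}. ab \<bullet> z \<le> \<beta>"
    and upper: "\<forall>z\<in>epigraph UNIV h. \<beta> \<le> ab \<bullet> z"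
    using separating_hyperplane_sets by metis
  show thesis
  proof (rule that[of "fst ab" "snd ab" \<beta>])
    show "(fst ab, snd ab) \<noteq> 0" using \<open>ab \<noteq> 0\<close> by simp
    show "fst ab \<bullet> x + snd ab * r \<le> \<beta>" if "r < h x" for r
      using lower that by (auto simp: inner_prod_def)
    show "\<beta> \<le> fst ab \<bullet> y + snd ab * r" if "h y \<le> r" for y r
      using bspec[OF upper, of "(y, r)"] that by (simp add: mem_epigraph inner_prod_def)
  qed
qed

lemma convex_on_subgradient_exists:
  fixes h :: "'a::euclidean_space \<Rightarrow> real"
  assumes "convex_on UNIV h"
  obtains w where "\<And>y. h x + w \<bullet> (y - x) \<le> h y"
proof -
  obtain a b \<beta> where ab: "(a, b) \<noteq> 0"
    and below: "\<And>r. r < h x \<Longrightarrow> a \<bullet> x + b * r \<le> \<beta>"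
    and above: "\<And>y r. h y \<le> r \<Longrightarrow> \<beta> \<le> a \<bullet> y + b * r"
    using convex_on_separating_hyperplane_epigraph[OF assms] by blast
  have "0 \<le> b" using below[of "h x - 1"] above[of x "h x"] by (simp add: algebra_simps)
  moreover have "b \<noteq> 0"
  proof
    assume "b = 0"
    then have "a \<bullet> a \<le> 0"
      using below[of "h x - 1"] above[of "x - a" "h (x - a)"] by (simp add: inner_diff_right)
    then have "a = 0" by (metis inner_eq_zero_iff inner_ge_zero order_antisym)
    then show False using ab \<open>b = 0\<close> by (simp add: zero_prod_def)
  qed
  ultimately have "0 < b" by simp
  have "h x \<le> (\<beta> - a \<bullet> x) / b"
  proof (rule dense_le)
    fix r assume "r < h x"
    then have "r * b \<le> \<beta> - a \<bullet> x" using below[of r] by (simp add: mult.commute)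
    then show "r \<le> (\<beta> - a \<bullet> x) / b" using \<open>0 < b\<close> by (simp add: pos_le_divide_eq)
  qed
  then have "a \<bullet> x + b * h x \<le> \<beta>" using \<open>0 < b\<close> by (simp add: pos_le_divide_eq mult.commute)
  have "h x + (- (1 / b) *\<^sub>R a) \<bullet> (y - x) \<le> h y" for y
  proof -
    have "(- (1 / b) *\<^sub>R a) \<bullet> (y - x) = (a \<bullet> x - a \<bullet> y) / b"
      by (simp add: inner_diff_right diff_divide_distrib)
    also have "\<dots> \<le> h y - h x"
      using above[of y "h y"] \<open>a \<bullet> x + b * h x \<le> \<beta>\<close> \<open>0 < b\<close>
      by (simp add: pos_divide_le_eq right_diff_distrib mult.commute)
    finally show ?thesis by simp
  qed
  then show thesis by (rule that)
qed

lemma subdiff_ereal_iff: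
  "w \<in> subdiff (\<lambda>y. ereal (h y)) x \<longleftrightarrow> (\<forall>y. h x + w \<bullet> (y - x) \<le> h y)"
  by (simp add: subdiff_def)

lemma subdiff_plus_ind_funI:
  assumes "x \<in> C" and "\<And>y. y \<in> C \<Longrightarrow> \<phi> x + u \<bullet> (y - x) \<le> \<phi> y"
  shows "u \<in> subdiff (\<lambda>y. ereal (\<phi> y) + ind_fun C y) x"
  using assms by (simp add: subdiff_def ind_fun_def)

lemma has_real_derivative_nonneg_at_right_min:
  fixes \<phi> :: "real \<Rightarrow> real"
  assumes "(\<phi> has_real_derivative D) (at a)" and "\<forall>\<^sub>F t in at_right a. \<phi> a \<le> \<phi> t"
  shows "0 \<le> D"
proof (rule ccontr)
  assume "\<not> 0 \<le> D"
  then obtain d where "0 < d" and dec: "\<And>t. 0 < t \<Longrightarrow> t < d \<Longrightarrow> \<phi> (a + t) < \<phi> a"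
    using DERIV_neg_dec_right[OF assms(1)] by force
  have "\<forall>\<^sub>F t in at_right a. \<phi> t < \<phi> a"
    unfolding eventually_at_right_field
  proof (intro exI[of _ "a + d"] conjI allI impI)
    show "a < a + d" using \<open>0 < d\<close> by simp
    fix t assume "a < t" "t < a + d"
    then show "\<phi> t < \<phi> a" using dec[of "t - a"] by simp
  qed
  with assms(2) have "\<forall>\<^sub>F t in at_right a. False"
    by eventually_elim simp
  then show False by (simp add: trivial_limit_at_right_real)
qed

lemma gderiv_along_line:
  fixes g :: "'a::euclidean_space \<Rightarrow> real"
  assumes "GDERIV g x :> D"
  shows "((\<lambda>t. g (x + t *\<^sub>R d)) has_real_derivative D \<bullet> d) (at 0)"
proof -
  have "(g has_derivative (\<lambda>v. v \<bullet> D)) (at (x + 0 *\<^sub>R d))"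
    using assms by (simp add: gderiv_def)
  then have "((\<lambda>t. g (x + t *\<^sub>R d)) has_derivative (\<lambda>t. (t *\<^sub>R d) \<bullet> D)) (at 0)"
    by (rule has_derivative_compose[rotated]) (auto intro!: derivative_eq_intros)
  then show ?thesis
    by (rule has_derivative_imp_has_field_derivative) (simp add: inner_commute)
qed

lemma square_ratio_along_line_deriv:
  fixes g :: "'a::euclidean_space \<Rightarrow> real"
  assumes "GDERIV g x :> Dg" and "g x \<noteq> 0"
  shows "((\<lambda>t. (a + t * b)\<^sup>2 / g (x + t *\<^sub>R d))
    has_real_derivative 2 * (a / g x) * b - (a / g x)\<^sup>2 * (Dg \<bullet> d)) (at 0)"
proof -
  have "((\<lambda>t. (a + t * b)\<^sup>2) has_real_derivative 2 * a * b) (at 0)"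
    by (auto intro!: derivative_eq_intros)
  moreover have "g (x + 0 *\<^sub>R d) \<noteq> 0" using assms(2) by simp
  ultimately show ?thesis
    by (rule DERIV_quotient[OF _ gderiv_along_line[OF assms(1)], THEN DERIV_cong])
      (use assms(2) in \<open>simp add: power2_eq_square field_simps\<close>)
qed

lemma eventually_nhds_at_right_segment:
  fixes x d :: "'a::real_normed_vector"
  assumes "\<forall>\<^sub>F z in nhds x. P z"
  shows "\<forall>\<^sub>F t in at_right 0. 0 < t \<and> t < 1 \<and> P (x + t *\<^sub>R d)"
proof -
  have "((\<lambda>t. x + t *\<^sub>R d) \<longlongrightarrow> x + 0 *\<^sub>R d) (at_right 0)"
    by (intro tendsto_intros)
  then have "((\<lambda>t. x + t *\<^sub>R d) \<longlongrightarrow> x) (at_right 0)" by simp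
  with assms have "\<forall>\<^sub>F t in at_right 0. P (x + t *\<^sub>R d)" by (rule eventually_compose_filterlim)
  moreover have "\<forall>\<^sub>F t in at_right 0. t < (1::real)"
    by (auto simp: eventually_at_right_field intro!: exI[of _ 1])
  moreover note eventually_at_right_less[of "0::real"]
  ultimately show ?thesis by eventually_elim simp
qed

lemma gderiv_eventually_pos:
  fixes g :: "'a::euclidean_space \<Rightarrow> real"
  assumes "GDERIV g x :> D" and "0 < g x"
  shows "\<forall>\<^sub>F z in nhds x. 0 < g z"
proof -
  have "isCont g x" using assms(1) unfolding gderiv_def by (rule has_derivative_continuous)
  then have "(g \<longlongrightarrow> g x) (nhds x)" by (simp add: isCont_def tendsto_at_iff_tendsto_nhds)
  then show ?thesis using assms(2) by (rule order_tendstoD(1))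
qed

lemma local_min_quadratic_fractional_variational_ineq:
  fixes f g h1 h2 :: "'a::euclidean_space \<Rightarrow> real"
  assumes f_convex: "convex_on UNIV f" and f_nonneg: "\<And>x. 0 \<le> f x"
    and C_convex: "convex C" and xs_in: "xs \<in> C" and y_in: "y \<in> C"
    and g_pos: "0 < g xs" and g_grad: "GDERIV g xs :> Dg" and h1_grad: "GDERIV h1 xs :> Dh1"
    and w_subgrad: "\<And>z. h2 xs + w \<bullet> (z - xs) \<le> h2 z"
    and local_min: "\<forall>\<^sub>F z in nhds xs. z \<in> C \<longrightarrow> g z \<noteq> 0 \<longrightarrow>
      (f xs)\<^sup>2 / g xs + h1 xs - h2 xs \<le> (f z)\<^sup>2 / g z + h1 z - h2 z"
  defines "c \<equiv> f xs / g xs"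
  shows "2 * c * f xs + (c\<^sup>2 *\<^sub>R Dg - Dh1 + w) \<bullet> (y - xs) \<le> 2 * c * f y"
proof -
  define d where "d = y - xs"
  define \<Delta> where "\<Delta> = f y - f xs"
  \<comment> \<open>A majorant of the objective along the segment, equal to it at \<open>t = 0\<close>.\<close>
  define \<psi> where "\<psi> = (\<lambda>t. (f xs + t * \<Delta>)\<^sup>2 / g (xs + t *\<^sub>R d) + h1 (xs + t *\<^sub>R d)
    - (h2 xs + t * (w \<bullet> d)))"
  have "g xs \<noteq> 0" using g_pos by simp
  have \<psi>_deriv: "(\<psi> has_real_derivative 2 * c * \<Delta> - c\<^sup>2 * (Dg \<bullet> d) + Dh1 \<bullet> d - w \<bullet> d) (at 0)"
    unfolding \<psi>_def
    by (rule square_ratio_along_line_deriv[OF g_grad \<open>g xs \<noteq> 0\<close>]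
        gderiv_along_line[OF h1_grad] derivative_eq_intros | simp add: c_def)+
  from eventually_nhds_at_right_segment
    [OF eventually_conj[OF gderiv_eventually_pos[OF g_grad g_pos] local_min], of d]
  have "\<forall>\<^sub>F t in at_right 0. \<psi> 0 \<le> \<psi> t"
  proof eventually_elim
    case (elim t)
    define xt where "xt = xs + t *\<^sub>R d"
    have xt_convex_comb: "xt = (1 - t) *\<^sub>R xs + t *\<^sub>R y" by (simp add: xt_def d_def algebra_simps)
    have "xt \<in> C" using convexD[OF C_convex xs_in y_in, of "1 - t" t] elim by (simp add: xt_convex_comb)
    with elim have "(f xs)\<^sup>2 / g xs + h1 xs - h2 xs \<le> (f xt)\<^sup>2 / g xt + h1 xt - h2 xt"
      by (simp add: xt_def)
    moreover have "f xt \<le> f xs + t * \<Delta>"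
      using convex_onD[OF f_convex, of t xs y] elim by (simp add: xt_convex_comb \<Delta>_def algebra_simps)
    then have "(f xt)\<^sup>2 / g xt \<le> (f xs + t * \<Delta>)\<^sup>2 / g xt"
      using elim f_nonneg[of xt] by (intro divide_right_mono power_mono) (simp_all add: xt_def)
    moreover have "h2 xs + t * (w \<bullet> d) \<le> h2 xt" using w_subgrad[of xt] by (simp add: xt_def)
    moreover have "\<psi> t = (f xs + t * \<Delta>)\<^sup>2 / g xt + h1 xt - (h2 xs + t * (w \<bullet> d))"
      by (simp add: \<psi>_def xt_def)
    moreover have "\<psi> 0 = (f xs)\<^sup>2 / g xs + h1 xs - h2 xs" by (simp add: \<psi>_def)
    ultimately show "\<psi> 0 \<le> \<psi> t" by linarith
  qed
  with \<psi>_deriv have "0 \<le> 2 * c * \<Delta> - c\<^sup>2 * (Dg \<bullet> d) + Dh1 \<bullet> d - w \<bullet> d"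
    by (rule has_real_derivative_nonneg_at_right_min)
  moreover have "(c\<^sup>2 *\<^sub>R Dg - Dh1 + w) \<bullet> d = c\<^sup>2 * (Dg \<bullet> d) - Dh1 \<bullet> d + w \<bullet> d"
    by (simp add: inner_diff_left inner_add_left)
  ultimately show ?thesis by (simp add: d_def \<Delta>_def algebra_simps)
qed

theorem theorem4p1:
  fixes f g h1 h2 :: "'a::euclidean_space \<Rightarrow> real"
    and Dg Dh1 :: "'a \<Rightarrow> 'a"
    and C :: "'a set" and xs :: 'a
  assumes f_nonneg: "\<And>x. f x \<ge> 0"
    and g_nonneg: "\<And>x. g x \<ge> 0"
    and C_closed: "closed C" and C_convex: "convex C"
    and nonempty: "C \<inter> {x. g x \<noteq> 0} \<noteq> {}"
    and f_convex: "convex_on UNIV f"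
    and g_grad: "\<And>x. GDERIV g x :> Dg x"
    and g_lip: "\<And>x. \<exists>e>0. \<exists>L. L-lipschitz_on (ball x e) Dg"
    and h1_grad: "\<And>x. GDERIV h1 x :> Dh1 x"
    and h1_lip: "\<And>x. \<exists>e>0. \<exists>L. L-lipschitz_on (ball x e) Dh1"
    and h2_convex: "convex_on UNIV h2"
    and xs_feas: "xs \<in> C \<inter> {x. g x \<noteq> 0}"
    and xs_locmin: "\<exists>e>0. \<forall>y\<in>C \<inter> {x. g x \<noteq> 0} \<inter> ball xs e.
        (f xs)\<^sup>2 / g xs + h1 xs - h2 xs \<le> (f y)\<^sup>2 / g y + h1 y - h2 y"
  shows "let c = f xs / g xs in
    \<exists>u \<in> subdiff (\<lambda>y. ereal (2 * c * f y) + ind_fun C y) xs.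
    \<exists>w \<in> subdiff (\<lambda>y. ereal (h2 y)) xs.
      0 = u - c\<^sup>2 *\<^sub>R Dg xs + Dh1 xs - w"
proof -
  define c where "c = f xs / g xs"
  have xs_in: "xs \<in> C" using xs_feas by simp
  have g_pos: "0 < g xs" using xs_feas g_nonneg[of xs] by (simp add: order_less_le)
  have local_min: "\<forall>\<^sub>F z in nhds xs. z \<in> C \<longrightarrow> g z \<noteq> 0 \<longrightarrow>
      (f xs)\<^sup>2 / g xs + h1 xs - h2 xs \<le> (f z)\<^sup>2 / g z + h1 z - h2 z"
  proof -
    obtain e where "0 < e" and "\<forall>y\<in>C \<inter> {x. g x \<noteq> 0} \<inter> ball xs e.
        (f xs)\<^sup>2 / g xs + h1 xs - h2 xs \<le> (f y)\<^sup>2 / g y + h1 y - h2 y"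
      using xs_locmin by blast
    then show ?thesis unfolding eventually_nhds_metric by (auto simp: dist_commute)
  qed
  obtain w where w: "\<And>z. h2 xs + w \<bullet> (z - xs) \<le> h2 z"
    using convex_on_subgradient_exists[OF h2_convex] by blast
  define u where "u = c\<^sup>2 *\<^sub>R Dg xs - Dh1 xs + w"
  have "u \<in> subdiff (\<lambda>y. ereal (2 * c * f y) + ind_fun C y) xs"
    unfolding u_def c_def
    by (intro subdiff_plus_ind_funI xs_in local_min_quadratic_fractional_variational_ineq
        [OF f_convex f_nonneg C_convex xs_in _ g_pos g_grad h1_grad w local_min])
  moreover have "w \<in> subdiff (\<lambda>y. ereal (h2 y)) xs" using w by (simp add: subdiff_ereal_iff)
  moreover have "0 = u - c\<^sup>2 *\<^sub>R Dg xs + Dh1 xs - w" by (simp add: u_def)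
  ultimately show ?thesis unfolding Let_def c_def by blast
qed

end
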